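(* Assume the standing hypotheses (P) described in the context and let $\epsilon>0$. Then almost surely $$\sup_{\phi\in\mathcal H^{pot}(\epsilon)}\big|\hat P^{(\beta)}_n(\phi)-P^{(\beta)}(\phi)\big|\longrightarrow0\quad\text{as }n\to\infty.$$
   Context: Let $d\in\mathbb N$; $\lambda$ is the restriction of Lebesgue measure to $[0,1]^d$, $G_{\#}\lambda$ the pushforward. $\mu^*$ is a probability measure on $[0,1]^d$ with Lebesgue density $p^*$, $p^*>0$ on $[0,1]^d$, $p^*=0$ outside. Neural networks with architecture $(l_0,\dots,l_L)$ and activation $\sigma$ realize $x_0\mapsto W_Lx_{L-1}+B_L$, $x_k=\sigma(W_kx_{k-1}+B_k)$; ReCU: $\sigma(x)=\max\{x,0\}^3$. $C^{k,\alpha}$ are Hölder spaces on $[0,1]^d$; $A\ge B$ means $A-B$ positive semidefinite; $d_{JS}$ is the Jensen–Shannon divergence. Hypotheses (P): $p^*\in C^{1,\alpha}([0,1]^d,\mathbb R)$ for some $\alpha\in(0,1)$; $\phi^*\in C^{3,\alpha}([0,1]^d,\mathbb R)$ is the Brenier potential with $\mu^*=(\nabla\phi^* )_{\#}\lambda$; $M\in(1,\infty)$ with $\frac1M\operatorname{Id}\le\operatorname{Hess}\phi^*\le M\operatorname{Id}$ on $[0,1]^d$, and $\beta:=1/M$. For each $\epsilon>0$, $\phi_\epsilon$ is a ReCU network with $\frac1{2M}\operatorname{Id}\le\operatorname{Hess}\phi_\epsilon\le2M\operatorname{Id}$ on $[0,1]^d$ and $d_{JS}(\mu^*,(\nabla\phi_\epsilon)_{\#}\lambda)\le\epsilon$,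 $\mathcal A^\phi(\epsilon)$ is its architecture, $H(\epsilon)=\|\phi_\epsilon\|_{C^{2,1}}$, $\tilde H(\epsilon)\ge H(\epsilon)$ is fixed, and $\mathcal H^{pot}(\epsilon)$ is the set of all ReCU networks $\phi\colon[0,1]^d\to\mathbb R$ with architecture $\mathcal A^\phi(\epsilon)$ and $\|\phi\|_{C^{2,1}([0,1]^d)}\le\tilde H(\epsilon)$. For $\kappa>0$: $P^{(\kappa)}(\phi)=\int_{([0,1]^d)^2}\mathrm{ReLU}\big(\phi(\frac{u+u'}2)-\frac{\phi(u)+\phi(u')}2+\frac\kappa8\|u-u'\|^2\big)du\,du'$ with $\mathrm{ReLU}(x)=\max\{x,0\}$. Let $m\colon\mathbb N\to\mathbb N$ be increasing with $m(n)\to\infty$, and let $U_1,U_2,\dots,U'_1,U'_2,\dots$ be independent random variables uniformly distributed on $[0,1]^d$; the empirical penalty is $\hat P^{(\kappa)}_n(\phi)=\frac1{m(n)}\sum_{j=1}^{m(n)}\mathrm{ReLU}\big(\phi(\frac{U_j+U'_j}2)-\frac{\phi(U_j)+\phi(U'_j)}2+\frac\kappa8\|U_j-U'_j\|^2\big)$. *)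

theory Defs
  imports "HOL-Analysis.Analysis" "HOL-Probability.Probability"
begin

abbreviation ucube :: "(real^'d) set" where
  "ucube \<equiv> cbox 0 One"

abbreviation ucube_int :: "(real^'d) set" where
  "ucube_int \<equiv> box 0 One"

fun pderivs :: "'d::finite list \<Rightarrow> (real^'d \<Rightarrow> real) \<Rightarrow> (real^'d \<Rightarrow> real)" where
  "pderivs [] f = f"
| "pderivs (i # is) f = (\<lambda>x. frechet_derivative (pderivs is f) (at x) (axis i 1))"

text \<open>Derivatives are taken in the open cube (values on the boundary are determined by continuity);
  the norm is infinite if f is not continuous on the closed cube or not k times differentiable
  in the open cube.\<close>
definition holder_norm :: "nat \<Rightarrow> real \<Rightarrow> (real^'d::finite \<Rightarrow> real) \<Rightarrow> ereal" where
  "holder_norm k \<alpha> f =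
    (if continuous_on ucube f \<and>
        (\<forall>ls::'d list. length ls < k \<longrightarrow> (\<forall>x\<in>ucube_int. pderivs ls f differentiable (at x)))
     then
       (SUP ls\<in>{ls::'d list. length ls \<le> k}.
          SUP x\<in>(if ls = [] then ucube else ucube_int). ereal \<bar>pderivs ls f x\<bar>)
       + (SUP ls\<in>{ls::'d list. length ls = k}.
          SUP p\<in>{p. fst p \<in> (if k = 0 then ucube else ucube_int) \<and>
                     snd p \<in> (if k = 0 then ucube else ucube_int) \<and> fst p \<noteq> snd p}.
            ereal (\<bar>pderivs ls f (fst p) - pderivs ls f (snd p)\<bar> / (dist (fst p) (snd p)) powr \<alpha>))
     else \<infinity>)"

definition holder_space :: "nat \<Rightarrow> real \<Rightarrow> (real^'d::finite \<Rightarrow> real) set" where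
  "holder_space k \<alpha> = {f. holder_norm k \<alpha> f < \<infinity>}"

definition hess_form :: "(real^'d::finite \<Rightarrow> real) \<Rightarrow> real^'d \<Rightarrow> real^'d \<Rightarrow> real" where
  "hess_form f x v = (\<Sum>i\<in>UNIV. \<Sum>j\<in>UNIV. v$i * pderivs [i, j] f x * v$j)"

text \<open>c1 Id \<le> Hess f \<le> c2 Id on [0,1]^d (checked in the open cube; equivalent on the closed cube
  by continuity of the Hessian), with A \<ge> B meaning A - B positive semidefinite.\<close>
definition hess_between :: "real \<Rightarrow> real \<Rightarrow> (real^'d::finite \<Rightarrow> real) \<Rightarrow> bool" where
  "hess_between c1 c2 f \<longleftrightarrow>
     (\<forall>x\<in>ucube_int. \<forall>v. c1 * (norm v)\<^sup>2 \<le> hess_form f x v \<and> hess_form f x v \<le> c2 * (norm v)\<^sup>2)"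

definition grad :: "(real^'d::finite \<Rightarrow> real) \<Rightarrow> real^'d \<Rightarrow> real^'d" where
  "grad f x = (\<chi> i. pderivs [i] f x)"

definition pushfwd :: "(real^'d::finite \<Rightarrow> real^'d) \<Rightarrow> (real^'d) measure" where
  "pushfwd G = distr (lebesgue_on ucube) borel G"

definition mixture :: "'a measure \<Rightarrow> 'a measure \<Rightarrow> 'a measure" where
  "mixture P Q = measure_of (space P) (sets P) (\<lambda>A. (emeasure P A + emeasure Q A) / 2)"

text \<open>Jensen-Shannon divergence (natural logarithm):
  d_JS(P,Q) = KL(P||M)/2 + KL(Q||M)/2 with M = (P+Q)/2.
  Note KL_divergence b M N = KL(N || M).\<close>
definition JS_div :: "'a measure \<Rightarrow> 'a measure \<Rightarrow> real" where
  "JS_div P Q = (KL_divergence (exp 1) (mixture P Q) P + KL_divergence (exp 1) (mixture P Q) Q) / 2"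

definition recu :: "real \<Rightarrow> real" where
  "recu x = (max x 0) ^ 3"

definition relu :: "real \<Rightarrow> real" where
  "relu x = max x 0"

text \<open>Vectors of R^l are represented as nat \<Rightarrow> real (entries with index \<ge> l are 0);
  W :: nat \<Rightarrow> nat \<Rightarrow> real is an l_out x l_in matrix, B :: nat \<Rightarrow> real a bias vector.\<close>
definition affine_layer ::
  "nat \<Rightarrow> nat \<Rightarrow> (nat \<Rightarrow> nat \<Rightarrow> real) \<Rightarrow> (nat \<Rightarrow> real) \<Rightarrow> (nat \<Rightarrow> real) \<Rightarrow> (nat \<Rightarrow> real)" where
  "affine_layer n_in n_out W B x = (\<lambda>i. if i < n_out then (\<Sum>j<n_in. W i j * x j) + B i else 0)"

fun net_eval :: "(real \<Rightarrow> real) \<Rightarrow> nat list \<Rightarrow> ((nat \<Rightarrow> nat \<Rightarrow> real) \<times> (nat \<Rightarrow> real)) list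
                  \<Rightarrow> (nat \<Rightarrow> real) \<Rightarrow> (nat \<Rightarrow> real)" where
  "net_eval \<sigma> (l0 # l1 # ls) ((W, B) # ps) x =
     (let y = affine_layer l0 l1 W B x in
      if ls = [] then y else net_eval \<sigma> (l1 # ls) ps (\<lambda>i. if i < l1 then \<sigma> (y i) else 0))"
| "net_eval \<sigma> _ _ x = x"

text \<open>A fixed enumeration of the coordinates of R^d (the class of networks is invariant under
  the choice, since first-layer weights are arbitrary).\<close>
definition coord_enum :: "nat \<Rightarrow> 'd::finite" where
  "coord_enum = (SOME f. bij_betw f {..<CARD('d)} (UNIV :: 'd set))"

definition vec_to_list_fun :: "real^'d::finite \<Rightarrow> (nat \<Rightarrow> real)" where
  "vec_to_list_fun x = (\<lambda>i. if i < CARD('d) then x $ coord_enum i else 0)"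

definition is_recu_net :: "nat list \<Rightarrow> (real^'d::finite \<Rightarrow> real) \<Rightarrow> bool" where
  "is_recu_net A \<phi> \<longleftrightarrow> 2 \<le> length A \<and> hd A = CARD('d) \<and> last A = 1 \<and>
     (\<exists>ps. length ps = length A - 1 \<and> (\<forall>x. \<phi> x = net_eval recu A ps (vec_to_list_fun x) 0))"

definition Hpot :: "nat list \<Rightarrow> real \<Rightarrow> (real^'d::finite \<Rightarrow> real) set" where
  "Hpot A H = {\<phi>. is_recu_net A \<phi> \<and> holder_norm 2 1 \<phi> \<le> ereal H}"

definition penalty_integrand :: "real \<Rightarrow> (real^'d::finite \<Rightarrow> real) \<Rightarrow> real^'d \<Rightarrow> real^'d \<Rightarrow> real" where
  "penalty_integrand \<kappa> \<phi> u u' =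
     relu (\<phi> ((1/2) *\<^sub>R (u + u')) - (\<phi> u + \<phi> u') / 2 + \<kappa> / 8 * (norm (u - u'))\<^sup>2)"

definition penalty :: "real \<Rightarrow> (real^'d::finite \<Rightarrow> real) \<Rightarrow> real" where
  "penalty \<kappa> \<phi> = integral\<^sup>L (lebesgue_on (ucube \<times> ucube)) (\<lambda>p. penalty_integrand \<kappa> \<phi> (fst p) (snd p))"

definition emp_penalty ::
  "real \<Rightarrow> (nat \<Rightarrow> nat) \<Rightarrow> (nat \<Rightarrow> 'w \<Rightarrow> real^'d::finite) \<Rightarrow> (nat \<Rightarrow> 'w \<Rightarrow> real^'d)
   \<Rightarrow> nat \<Rightarrow> 'w \<Rightarrow> (real^'d \<Rightarrow> real) \<Rightarrow> real" where
  "emp_penalty \<kappa> m U U' n \<omega> \<phi> =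
     (1 / real (m n)) * (\<Sum>j\<in>{1..m n}. penalty_integrand \<kappa> \<phi> (U j \<omega>) (U' j \<omega>))"

end

theory Submission
  imports Defs
begin

(* The penalty integrand is bounded on the cube and depends on \<phi> 2-Lipschitz continuously in the
   sup-norm over the cube.  A bound on the C^{2,1} norm makes the class H^pot uniformly bounded and
   uniformly Lipschitz, hence totally bounded in the sup-norm: for every k it has a finite
   1/(k+1)-net.  By Hoeffding's inequality and Borel-Cantelli, the empirical penalty converges
   almost surely to the penalty simultaneously for the countably many elements of all these nets,
   and almost surely all sample points lie in the cube.  On that event, replacing an arbitrary \<phi>
   by a nearby net element changes both the empirical and the true penalty by at most 2/(k+1),
   uniformly in n, so the supremum of the deviations tends to 0. *)

section \<open>Hoelder bounds, Lipschitz continuity and finite uniform nets\<close>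

lemma One_vec_nth [simp]: "(One :: real^'d::finite) $ i = 1"
  by (simp add: cart_eq_inner_axis inner_sum_Basis)

lemma sum_Basis_vec_nth [simp]: "(\<Sum>b\<in>Basis. (b :: real^'d::finite) $ i) = 1"
  using One_vec_nth[of i] by (simp add: sum_component)

lemma ucube_int_nonempty: "(ucube_int :: (real^'d::finite) set) \<noteq> {}"
  by (simp add: box_ne_empty inner_Basis)

lemma closure_ucube_int: "closure (ucube_int :: (real^'d::finite) set) = ucube"
  using ucube_int_nonempty by simp

lemma holder_norm_leD:
  fixes \<phi> :: "real^'d::finite \<Rightarrow> real"
  assumes norm_le: "holder_norm k \<alpha> \<phi> \<le> ereal H" and k: "1 \<le> k"
  shows "continuous_on ucube \<phi>"
    and "\<And>x. x \<in> ucube_int \<Longrightarrow> \<phi> differentiable (at x)"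
    and "\<And>x. x \<in> ucube \<Longrightarrow> \<bar>\<phi> x\<bar> \<le> H"
    and "\<And>x i. x \<in> ucube_int \<Longrightarrow> \<bar>pderivs [i] \<phi> x\<bar> \<le> H"
proof -
  let ?D = "if k = 0 then ucube else ucube_int :: (real^'d) set"
  define regular where "regular \<longleftrightarrow> continuous_on ucube \<phi> \<and>
        (\<forall>ls::'d list. length ls < k \<longrightarrow> (\<forall>x\<in>ucube_int. pderivs ls \<phi> differentiable (at x)))"
  define sup_part where "sup_part = (SUP ls\<in>{ls::'d list. length ls \<le> k}.
          SUP x\<in>(if ls = [] then ucube else ucube_int). ereal \<bar>pderivs ls \<phi> x\<bar>)"
  define holder_part where "holder_part = (SUP ls\<in>{ls::'d list. length ls = k}.
          SUP p\<in>{p. fst p \<in> ?D \<and> snd p \<in> ?D \<and> fst p \<noteq> snd p}.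
            ereal (\<bar>pderivs ls \<phi> (fst p) - pderivs ls \<phi> (snd p)\<bar> / (dist (fst p) (snd p)) powr \<alpha>))"
  have unfold: "holder_norm k \<alpha> \<phi> = (if regular then sup_part + holder_part else \<infinity>)"
    unfolding holder_norm_def regular_def sup_part_def holder_part_def by simp
  have regular using norm_le unfold by (cases regular) auto
  then show "continuous_on ucube \<phi>"
    by (simp add: regular_def)
  show "\<phi> differentiable (at x)" if "x \<in> ucube_int" for x
    using conjunct2[OF \<open>regular\<close>[unfolded regular_def], rule_format, of "[]"] k that by simp
  define x y :: "real^'d" where "x = (1/2) *\<^sub>R One" and "y = (1/4) *\<^sub>R One"
  have xy: "x \<in> ucube_int" "y \<in> ucube_int" "x \<noteq> y"
    unfolding x_def y_def by (auto simp: mem_box_cart vec_eq_iff)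
  have "0 \<le> holder_part"
    unfolding holder_part_def
    by (rule SUP_upper2[of "replicate k undefined"], simp, rule SUP_upper2[of "(x, y)"]) (use xy k in auto)
  then have "sup_part \<le> ereal H"
    using norm_le unfold \<open>regular\<close> by (metis add_increasing2 order_refl order_trans)
  then have pderivs_le: "\<bar>pderivs ls \<phi> x\<bar> \<le> H"
    if "length ls \<le> k" "x \<in> (if ls = [] then ucube else ucube_int)" for ls x
  proof -
    have "ereal \<bar>pderivs ls \<phi> x\<bar> \<le> sup_part"
      unfolding sup_part_def by (rule SUP_upper2[of ls], use that in simp, rule SUP_upper) (use that in auto)
    with \<open>sup_part \<le> ereal H\<close> show ?thesis by (metis ereal_less_eq(3) order_trans)
  qed
  show "\<And>x. x \<in> ucube \<Longrightarrow> \<bar>\<phi> x\<bar> \<le> H"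
    using pderivs_le[of "[]"] by simp
  show "\<And>x i. x \<in> ucube_int \<Longrightarrow> \<bar>pderivs [i] \<phi> x\<bar> \<le> H"
    using pderivs_le[of "[i]" for i] k by simp
qed

lemma abs_frechet_derivative_le:
  fixes \<phi> :: "real^'d::finite \<Rightarrow> real"
  assumes "\<phi> differentiable (at x)" and "\<And>i. \<bar>pderivs [i] \<phi> x\<bar> \<le> H"
  shows "\<bar>frechet_derivative \<phi> (at x) v\<bar> \<le> real CARD('d) * H * norm v"
proof -
  define D where "D = frechet_derivative \<phi> (at x)"
  have "linear D" unfolding D_def by (rule linear_frechet_derivative[OF assms(1)])
  have "D v = D (\<Sum>i\<in>UNIV. (v$i) *\<^sub>R axis i 1)"
    using basis_expansion[of v] by (simp add: scalar_mult_eq_scaleR)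
  also have "\<dots> = (\<Sum>i\<in>UNIV. v$i * D (axis i 1))"
    by (simp add: linear_sum[OF \<open>linear D\<close>] linear_scale[OF \<open>linear D\<close>])
  finally have "\<bar>D v\<bar> \<le> (\<Sum>i\<in>UNIV. \<bar>v$i\<bar> * \<bar>pderivs [i] \<phi> x\<bar>)"
    by (simp add: D_def) (rule order.trans[OF sum_abs], simp add: abs_mult)
  also have "\<dots> \<le> (\<Sum>i\<in>(UNIV::'d set). norm v * H)"
    by (intro sum_mono mult_mono component_le_norm_cart assms(2)) auto
  finally show ?thesis by (simp add: D_def mult_ac)
qed

lemma lipschitz_on_closure_if_partials_bounded:
  fixes \<phi> :: "real^'d::finite \<Rightarrow> real"
  assumes "convex S" "S \<noteq> {}" "continuous_on (closure S) \<phi>"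
    and differentiable: "\<And>x. x \<in> S \<Longrightarrow> \<phi> differentiable (at x)"
    and partials: "\<And>x i. x \<in> S \<Longrightarrow> \<bar>pderivs [i] \<phi> x\<bar> \<le> H"
  shows "(real CARD('d) * H)-lipschitz_on (closure S) \<phi>"
proof (rule lipschitz_on_closure[OF lipschitz_onI \<open>continuous_on (closure S) \<phi>\<close>])
  show "0 \<le> real CARD('d) * H"
  proof -
    obtain x where "x \<in> S" using \<open>S \<noteq> {}\<close> by blast
    then have "0 \<le> H" using partials[of x] by force
    then show ?thesis by simp
  qed
  fix x y assume "x \<in> S" "y \<in> S"
  have "norm (\<phi> x - \<phi> y) \<le> real CARD('d) * H * norm (x - y)"
  proof (rule differentiable_bound[OF \<open>convex S\<close> _ _ \<open>x \<in> S\<close> \<open>y \<in> S\<close>])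
    show "(\<phi> has_derivative frechet_derivative \<phi> (at z)) (at z within S)" if "z \<in> S" for z
      using differentiable[OF that] by (simp add: frechet_derivative_works has_derivative_at_withinI)
    show "onorm (frechet_derivative \<phi> (at z)) \<le> real CARD('d) * H" if "z \<in> S" for z
      by (rule onorm_le) (use abs_frechet_derivative_le[OF differentiable[OF that] partials[OF that]] in simp)
  qed
  then show "dist (\<phi> x) (\<phi> y) \<le> real CARD('d) * H * dist x y"
    by (simp add: dist_norm)
qed

lemma floor_divide_eq_imp_abs_diff_less:
  fixes a b \<eta> :: real
  assumes "\<eta> > 0" "\<lfloor>a / \<eta>\<rfloor> = \<lfloor>b / \<eta>\<rfloor>"
  shows "\<bar>a - b\<bar> < \<eta>"
proof -
  have "\<bar>a / \<eta> - b / \<eta>\<bar> < 1"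
    using assms(2) by linarith
  then show ?thesis
    using assms(1) by (simp add: diff_divide_distrib[symmetric] abs_divide divide_less_eq)
qed

lemma finite_uniform_net_if_bounded_lipschitz:
  fixes K :: "('a::metric_space \<Rightarrow> real) set"
  assumes "compact S"
    and bounded: "\<And>\<phi> x. \<phi> \<in> K \<Longrightarrow> x \<in> S \<Longrightarrow> \<bar>\<phi> x\<bar> \<le> H"
    and lipschitz: "\<And>\<phi>. \<phi> \<in> K \<Longrightarrow> L-lipschitz_on S \<phi>"
    and "\<delta> > 0"
  shows "\<exists>N. finite N \<and> N \<subseteq> K \<and> (\<forall>\<phi>\<in>K. \<exists>\<psi>\<in>N. \<forall>x\<in>S. \<bar>\<phi> x - \<psi> x\<bar> \<le> \<delta>)"
proof -
  define r where "r = \<delta> / (4 * (\<bar>L\<bar> + 1))"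
  define \<eta> where "\<eta> = \<delta> / 4"
  have "r > 0" "\<eta> > 0" using \<open>\<delta> > 0\<close> by (auto simp: r_def \<eta>_def)
  have "L * r \<le> (\<bar>L\<bar> + 1) * r"
    using \<open>r > 0\<close> by (intro mult_right_mono) auto
  also have "\<dots> = \<delta> / 4"
    unfolding r_def by (simp add: field_simps add_pos_nonneg)
  finally have "L * r \<le> \<delta> / 4" .
  obtain G where G: "G \<subseteq> S" "finite G" "S \<subseteq> (\<Union>g\<in>G. ball g r)"
    by (rule compactE_image[OF \<open>compact S\<close>, of S "\<lambda>g. ball g r"]) (use \<open>r > 0\<close> in auto)
  txt \<open>Functions with the same rounded values \<open>\<lfloor>\<phi> g / \<eta>\<rfloor>\<close> on the finite \<open>r\<close>-net \<open>G\<close>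
    are \<open>\<delta>\<close>-close on \<open>S\<close>, and only finitely many such roundings occur.\<close>
  define key where "key \<phi> = restrict (\<lambda>g. \<lfloor>\<phi> g / \<eta>\<rfloor>) G" for \<phi> :: "'a \<Rightarrow> real"
  have "key ` K \<subseteq> PiE G (\<lambda>_. {\<lfloor>-H / \<eta>\<rfloor>..\<lfloor>H / \<eta>\<rfloor>})"
  proof (rule image_subsetI)
    fix \<phi> assume "\<phi> \<in> K"
    have "\<lfloor>\<phi> g / \<eta>\<rfloor> \<in> {\<lfloor>-H / \<eta>\<rfloor>..\<lfloor>H / \<eta>\<rfloor>}" if "g \<in> G" for g
    proof -
      have "-H \<le> \<phi> g" "\<phi> g \<le> H"
        using bounded[OF \<open>\<phi> \<in> K\<close>, of g] \<open>g \<in> G\<close> G(1) by auto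
      then have "-H / \<eta> \<le> \<phi> g / \<eta>" "\<phi> g / \<eta> \<le> H / \<eta>"
        using \<open>\<eta> > 0\<close> divide_right_mono by force+
      then show ?thesis by (auto intro: floor_mono)
    qed
    then show "key \<phi> \<in> PiE G (\<lambda>_. {\<lfloor>-H / \<eta>\<rfloor>..\<lfloor>H / \<eta>\<rfloor>})"
      by (auto simp: key_def)
  qed
  then have "finite (key ` K)"
    by (rule finite_subset) (simp add: finite_PiE G(2))
  define rep where "rep k = (SOME \<psi>. \<psi> \<in> K \<and> key \<psi> = k)" for k
  have rep: "rep (key \<phi>) \<in> K \<and> key (rep (key \<phi>)) = key \<phi>" if "\<phi> \<in> K" for \<phi>
    unfolding rep_def by (rule someI[of _ \<phi>]) (use that in auto)
  have close: "\<bar>\<phi> x - \<psi> x\<bar> \<le> \<delta>" if "\<phi> \<in> K" "\<psi> \<in> K" "key \<psi> = key \<phi>" "x \<in> S" for \<phi> \<psi> x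
  proof -
    obtain g where g: "g \<in> G" "dist g x < r" using G(3) \<open>x \<in> S\<close> by auto
    then have "g \<in> S" using G(1) by auto
    have near: "\<bar>f x - f g\<bar> \<le> \<delta> / 4" if "f \<in> K" for f
    proof -
      have "\<bar>f x - f g\<bar> \<le> L * dist x g"
        using lipschitz_onD[OF lipschitz[OF that] \<open>x \<in> S\<close> \<open>g \<in> S\<close>] by (simp add: dist_real_def)
      also have "\<dots> \<le> L * r"
        using g(2) lipschitz_on_nonneg[OF lipschitz[OF that]] by (simp add: dist_commute mult_left_mono)
      finally show ?thesis using \<open>L * r \<le> \<delta> / 4\<close> by linarith
    qed
    have "\<bar>\<phi> g - \<psi> g\<bar> < \<eta>"
      using \<open>\<eta> > 0\<close> fun_cong[OF \<open>key \<psi> = key \<phi>\<close>, of g] g(1)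
      by (intro floor_divide_eq_imp_abs_diff_less) (auto simp: key_def)
    then show ?thesis
      using near[OF that(1)] near[OF that(2)] unfolding \<eta>_def by linarith
  qed
  show ?thesis
  proof (intro exI[of _ "rep ` key ` K"] conjI ballI)
    show "finite (rep ` key ` K)" using \<open>finite (key ` K)\<close> by simp
    show "rep ` key ` K \<subseteq> K" using rep by auto
    show "\<exists>\<psi>\<in>rep ` key ` K. \<forall>x\<in>S. \<bar>\<phi> x - \<psi> x\<bar> \<le> \<delta>" if "\<phi> \<in> K" for \<phi>
    proof
      show "\<forall>x\<in>S. \<bar>\<phi> x - rep (key \<phi>) x\<bar> \<le> \<delta>"
        using rep[OF that] close[OF that] by simp
    qed (use that in simp)
  qed
qed

section \<open>The penalty integrand\<close>

lemma midpoint_in_ucube: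
  assumes "u \<in> ucube" "u' \<in> ucube"
  shows "(1/2) *\<^sub>R (u + u') \<in> (ucube :: (real^'d::finite) set)"
  using convexD[OF convex_box(1) assms, of "1/2" "1/2"] by (simp add: scaleR_right_distrib)

lemma norm_diff_le_card_ucube:
  fixes x y :: "real^'d::finite"
  assumes "x \<in> ucube" "y \<in> ucube"
  shows "norm (x - y) \<le> real CARD('d)"
proof -
  have "norm (x - y) \<le> (\<Sum>i\<in>UNIV. \<bar>(x - y)$i\<bar>)" by (rule norm_le_l1_cart)
  also have "\<dots> \<le> (\<Sum>i\<in>(UNIV::'d set). 1)"
  proof (intro sum_mono)
    fix i
    have "0 \<le> x $ i" "x $ i \<le> 1" "0 \<le> y $ i" "y $ i \<le> 1"
      using assms by (simp_all add: mem_box_cart)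
    then show "\<bar>(x - y) $ i\<bar> \<le> 1"
      by (auto simp: abs_le_iff)
  qed
  finally show ?thesis by simp
qed

lemma relu_midpoint_gap_bounds:
  fixes a b c q H C :: real
  assumes "\<bar>a\<bar> \<le> H" "\<bar>b\<bar> \<le> H" "\<bar>c\<bar> \<le> H" "\<bar>q\<bar> \<le> C"
  shows "relu (a - (b + c) / 2 + q) \<in> {0 .. 2 * H + C}"
  using assms unfolding relu_def by (auto simp: abs_le_iff add_divide_distrib)

lemma abs_relu_midpoint_gap_diff_le:
  fixes a b c a' b' c' q \<delta> :: real
  assumes "\<bar>a - a'\<bar> \<le> \<delta>" "\<bar>b - b'\<bar> \<le> \<delta>" "\<bar>c - c'\<bar> \<le> \<delta>"
  shows "\<bar>relu (a - (b + c) / 2 + q) - relu (a' - (b' + c') / 2 + q)\<bar> \<le> 2 * \<delta>"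
  using assms unfolding relu_def by (auto simp: abs_le_iff max_def add_divide_distrib)

lemma penalty_integrand_bounds:
  fixes \<phi> :: "real^'d::finite \<Rightarrow> real"
  assumes bounded: "\<And>x. x \<in> ucube \<Longrightarrow> \<bar>\<phi> x\<bar> \<le> H" and "u \<in> ucube" "u' \<in> ucube"
  shows "penalty_integrand \<kappa> \<phi> u u' \<in> {0 .. 2 * H + \<bar>\<kappa>\<bar> * real CARD('d)^2}"
proof -
  have "norm (u - u') ^ 2 \<le> real CARD('d) ^ 2"
    by (rule power_mono[OF norm_diff_le_card_ucube[OF assms(2,3)] norm_ge_zero])
  then have "\<bar>\<kappa>\<bar> / 8 * norm (u - u') ^ 2 \<le> \<bar>\<kappa>\<bar> * real CARD('d) ^ 2"
    by (intro mult_mono) auto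
  then have "\<bar>\<kappa> / 8 * norm (u - u') ^ 2\<bar> \<le> \<bar>\<kappa>\<bar> * real CARD('d) ^ 2"
    by (simp add: abs_mult)
  then show ?thesis
    unfolding penalty_integrand_def
    by (intro relu_midpoint_gap_bounds bounded midpoint_in_ucube assms(2,3))
qed

lemma penalty_integrand_diff_le:
  fixes \<phi> \<psi> :: "real^'d::finite \<Rightarrow> real"
  assumes close: "\<And>x. x \<in> ucube \<Longrightarrow> \<bar>\<phi> x - \<psi> x\<bar> \<le> \<delta>" and "u \<in> ucube" "u' \<in> ucube"
  shows "\<bar>penalty_integrand \<kappa> \<phi> u u' - penalty_integrand \<kappa> \<psi> u u'\<bar> \<le> 2 * \<delta>"
  unfolding penalty_integrand_def
  by (intro abs_relu_midpoint_gap_diff_le close midpoint_in_ucube assms(2,3))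

lemma continuous_on_penalty_integrand:
  assumes "continuous_on UNIV \<phi>"
  shows "continuous_on UNIV (\<lambda>p. penalty_integrand \<kappa> \<phi> (fst p) (snd p))"
  unfolding penalty_integrand_def relu_def
  by (intro continuous_intros continuous_on_compose2[OF assms]) auto

text \<open>Outside the cube \<open>\<phi>\<close> is arbitrary, so the penalty integrand evaluated at the samples need
  not even be measurable.  Clamping the function and its arguments to the cube gives a continuous,
  hence Borel, integrand on \<open>\<real>\<^sup>d \<times> \<real>\<^sup>d\<close> that agrees with it on the cube.\<close>
definition clamped_penalty_integrand ::
  "real \<Rightarrow> (real^'d::finite \<Rightarrow> real) \<Rightarrow> (real^'d) \<times> (real^'d) \<Rightarrow> real" where
  "clamped_penalty_integrand \<kappa> \<phi> p =
     penalty_integrand \<kappa> (\<phi> \<circ> clamp 0 One) (clamp 0 One (fst p)) (clamp 0 One (snd p))"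

lemma clamp_in_ucube: "clamp 0 One x \<in> (ucube :: (real^'d::finite) set)"
  by (rule clamp_in_interval) (simp add: inner_sum_Basis)

lemma clamped_penalty_integrand_eq:
  assumes "u \<in> ucube" "u' \<in> ucube"
  shows "clamped_penalty_integrand \<kappa> \<phi> (u, u') = penalty_integrand \<kappa> \<phi> u u'"
  using assms midpoint_in_ucube[OF assms]
  by (simp add: clamped_penalty_integrand_def penalty_integrand_def clamp_cancel_cbox)

lemma clamped_penalty_integrand_bounds:
  fixes \<phi> :: "real^'d::finite \<Rightarrow> real"
  assumes "\<And>x. x \<in> ucube \<Longrightarrow> \<bar>\<phi> x\<bar> \<le> H"
  shows "clamped_penalty_integrand \<kappa> \<phi> p \<in> {0 .. 2 * H + \<bar>\<kappa>\<bar> * real CARD('d)^2}"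
  unfolding clamped_penalty_integrand_def
  by (rule penalty_integrand_bounds) (auto intro: assms clamp_in_ucube)

lemma clamped_penalty_integrand_diff_le:
  fixes \<phi> \<psi> :: "real^'d::finite \<Rightarrow> real"
  assumes "\<And>x. x \<in> ucube \<Longrightarrow> \<bar>\<phi> x - \<psi> x\<bar> \<le> \<delta>"
  shows "\<bar>clamped_penalty_integrand \<kappa> \<phi> p - clamped_penalty_integrand \<kappa> \<psi> p\<bar> \<le> 2 * \<delta>"
  unfolding clamped_penalty_integrand_def
  by (rule penalty_integrand_diff_le) (auto intro: assms clamp_in_ucube)

lemma borel_measurable_clamped_penalty_integrand:
  assumes "continuous_on ucube \<phi>"
  shows "clamped_penalty_integrand \<kappa> \<phi> \<in> borel_measurable borel"
proof -
  have clamp: "continuous_on UNIV (clamp 0 (One :: real^'d))"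
    using clamp_continuous_at[of 0 "One :: real^'d" "\<lambda>x. x"] by (simp add: continuous_at_imp_continuous_on)
  have clamp_pair: "continuous_on UNIV (\<lambda>p :: (real^'d) \<times> (real^'d). (clamp 0 One (fst p), clamp 0 One (snd p)))"
    by (intro continuous_on_Pair continuous_on_compose2[OF clamp continuous_on_fst[OF continuous_on_id]]
        continuous_on_compose2[OF clamp continuous_on_snd[OF continuous_on_id]]) auto
  have "continuous_on UNIV (\<phi> \<circ> clamp 0 One)"
    using clamp_continuous_at[OF assms] by (simp add: continuous_at_imp_continuous_on comp_def)
  from continuous_on_compose2[OF continuous_on_penalty_integrand[OF this] clamp_pair subset_UNIV]
  have "continuous_on UNIV (clamped_penalty_integrand \<kappa> \<phi>)"
    unfolding clamped_penalty_integrand_def[abs_def] by simp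
  then show ?thesis
    by (rule borel_measurable_continuous_onI)
qed

section \<open>Penalties as integrals over uniform samples\<close>

lemma emeasure_lborel_ucube: "emeasure lborel (ucube :: (real^'d::finite) set) = 1"
  by (simp add: emeasure_lborel_cbox_eq)

lemma prob_space_uniform_ucube: "prob_space (uniform_measure lborel (ucube :: (real^'d::finite) set))"
  by (intro prob_space_uniform_measure) (simp_all add: emeasure_lborel_ucube)

lemma uniform_ucube_eq_density:
  "uniform_measure lborel (ucube :: (real^'d::finite) set) = density lborel (\<lambda>x. ennreal (indicator ucube x))"
  unfolding uniform_measure_def emeasure_lborel_ucube
  by (simp add: ennreal_indicator divide_ennreal_def)

lemma integral_uniform_ucube_pair:
  fixes f :: "(real^'d::finite) \<times> (real^'d) \<Rightarrow> real"
  assumes f: "f \<in> borel_measurable borel"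
  shows "integral\<^sup>L (uniform_measure lborel ucube \<Otimes>\<^sub>M uniform_measure lborel ucube) f
       = integral\<^sup>L (lebesgue_on (ucube \<times> ucube)) f"
proof -
  let ?S = "ucube \<times> ucube :: ((real^'d) \<times> (real^'d)) set"
  have "?S \<in> sets borel" by (intro borel_closed closed_Times closed_cbox)
  have "uniform_measure lborel ucube \<Otimes>\<^sub>M uniform_measure lborel ucube
      = density (lborel \<Otimes>\<^sub>M lborel)
          (\<lambda>(x, y). ennreal (indicator (ucube :: (real^'d) set) x) * ennreal (indicator (ucube :: (real^'d) set) y))"
    unfolding uniform_ucube_eq_density
    by (rule pair_measure_density) (auto intro: prob_space_imp_sigma_finite prob_space_uniform_ucube
        simp: uniform_ucube_eq_density[symmetric] lborel.sigma_finite_measure_axioms)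
  also have "\<dots> = density lborel (\<lambda>p. ennreal (indicator ?S p))"
    unfolding lborel_prod
    by (intro arg_cong[where f="density lborel"] ext) (auto simp: indicator_def)
  finally have "integral\<^sup>L (uniform_measure lborel ucube \<Otimes>\<^sub>M uniform_measure lborel ucube) f
      = integral\<^sup>L lborel (\<lambda>p. indicator ?S p *\<^sub>R f p)"
    using \<open>?S \<in> sets borel\<close> f by (simp add: integral_density)
  also have "\<dots> = integral\<^sup>L lebesgue (\<lambda>p. indicator ?S p *\<^sub>R f p)"
    using \<open>?S \<in> sets borel\<close> f by (intro integral_completion[symmetric]) auto
  also have "\<dots> = integral\<^sup>L (lebesgue_on ?S) f"
    using \<open>?S \<in> sets borel\<close> by (intro integral_restrict_space[symmetric]) (simp add: sets_completionI_sets)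
  finally show ?thesis .
qed

lemma penalty_eq_integral_uniform:
  fixes \<phi> :: "real^'d::finite \<Rightarrow> real"
  assumes "continuous_on ucube \<phi>"
  shows "penalty \<kappa> \<phi> = integral\<^sup>L (uniform_measure lborel ucube \<Otimes>\<^sub>M uniform_measure lborel ucube)
                                   (clamped_penalty_integrand \<kappa> \<phi>)"
  unfolding integral_uniform_ucube_pair[OF borel_measurable_clamped_penalty_integrand[OF assms]] penalty_def
  by (rule Bochner_Integration.integral_cong) (auto simp: clamped_penalty_integrand_eq space_restrict_space)

lemma penalty_diff_le:
  fixes \<phi> \<psi> :: "real^'d::finite \<Rightarrow> real"
  assumes "continuous_on ucube \<phi>" "continuous_on ucube \<psi>"
    and "\<And>x. x \<in> ucube \<Longrightarrow> \<bar>\<phi> x\<bar> \<le> H" "\<And>x. x \<in> ucube \<Longrightarrow> \<bar>\<psi> x\<bar> \<le> H"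
    and close: "\<And>x. x \<in> ucube \<Longrightarrow> \<bar>\<phi> x - \<psi> x\<bar> \<le> \<delta>"
  shows "\<bar>penalty \<kappa> \<phi> - penalty \<kappa> \<psi>\<bar> \<le> 2 * \<delta>"
proof -
  define Q where "Q = uniform_measure lborel (ucube :: (real^'d) set) \<Otimes>\<^sub>M uniform_measure lborel (ucube :: (real^'d) set)"
  interpret Q: prob_space Q
    unfolding Q_def by (intro prob_space_pair prob_space_uniform_ucube)
  have "sets Q = sets borel"
    unfolding Q_def borel_prod[symmetric] by (intro sets_pair_measure_cong) simp_all
  then have "measurable Q borel = measurable borel borel"
    by (rule measurable_cong_sets) simp
  then have integrable: "integrable Q (clamped_penalty_integrand \<kappa> f)"
    if "continuous_on ucube f" "\<And>x. x \<in> ucube \<Longrightarrow> \<bar>f x\<bar> \<le> H" for f :: "real^'d \<Rightarrow> real"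
    using borel_measurable_clamped_penalty_integrand[OF that(1)]
      clamped_penalty_integrand_bounds[where \<phi>=f and \<kappa>=\<kappa>, OF that(2)]
    by (intro Q.integrable_const_bound[where B="2 * H + \<bar>\<kappa>\<bar> * real CARD('d)^2"] AE_I2) auto
  have "penalty \<kappa> \<phi> - penalty \<kappa> \<psi>
      = integral\<^sup>L Q (\<lambda>p. clamped_penalty_integrand \<kappa> \<phi> p - clamped_penalty_integrand \<kappa> \<psi> p)"
    unfolding penalty_eq_integral_uniform[OF assms(1)] penalty_eq_integral_uniform[OF assms(2)] Q_def[symmetric]
    by (rule Bochner_Integration.integral_diff[symmetric, OF integrable integrable]) (use assms in auto)
  also have "\<bar>\<dots>\<bar> \<le> integral\<^sup>L Q (\<lambda>p. 2 * \<delta>)"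
    by (rule integral_abs_bound_integral)
       (use integrable assms clamped_penalty_integrand_diff_le[OF close] in auto)
  also have "\<dots> = 2 * \<delta>"
    by (simp add: Q.prob_space)
  finally show ?thesis .
qed

lemma abs_mean_diff_le:
  fixes f g :: "'a \<Rightarrow> real"
  assumes "\<And>j. j \<in> A \<Longrightarrow> \<bar>f j - g j\<bar> \<le> c" "0 \<le> c"
  shows "\<bar>1 / real (card A) * (\<Sum>j\<in>A. f j) - 1 / real (card A) * (\<Sum>j\<in>A. g j)\<bar> \<le> c"
proof (cases "card A = 0")
  case False
  have "\<bar>(\<Sum>j\<in>A. f j) - (\<Sum>j\<in>A. g j)\<bar> \<le> (\<Sum>j\<in>A. \<bar>f j - g j\<bar>)"
    by (metis sum_abs sum_subtractf)
  also have "\<dots> \<le> real (card A) * c"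
    using sum_mono[OF assms(1)] by simp
  finally show ?thesis
    using False by (simp add: diff_divide_distrib[symmetric] abs_divide divide_le_eq mult.commute)
qed (use assms in simp)

lemma emp_penalty_diff_le:
  fixes \<phi> \<psi> :: "real^'d::finite \<Rightarrow> real"
  assumes "\<And>j. j \<in> {1..m n} \<Longrightarrow> U j \<omega> \<in> ucube \<and> U' j \<omega> \<in> ucube"
    and "\<And>x. x \<in> ucube \<Longrightarrow> \<bar>\<phi> x - \<psi> x\<bar> \<le> \<delta>" "0 \<le> \<delta>"
  shows "\<bar>emp_penalty \<kappa> m U U' n \<omega> \<phi> - emp_penalty \<kappa> m U U' n \<omega> \<psi>\<bar> \<le> 2 * \<delta>"
  using abs_mean_diff_le[of "{1..m n}" "\<lambda>j. penalty_integrand \<kappa> \<phi> (U j \<omega>) (U' j \<omega>)"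
      "\<lambda>j. penalty_integrand \<kappa> \<psi> (U j \<omega>) (U' j \<omega>)" "2 * \<delta>"] assms
  by (simp add: emp_penalty_def penalty_integrand_diff_le)

section \<open>A strong law for bounded independent variables\<close>

lemma (in prob_space) AE_eventually_mean_close:
  fixes X :: "nat \<Rightarrow> 'a \<Rightarrow> real"
  assumes indep: "indep_vars (\<lambda>_. borel) X {1..}"
    and bounded: "\<And>j. 1 \<le> j \<Longrightarrow> AE x in M. X j x \<in> {a..b}" and "a < b"
    and expectation: "\<And>j. 1 \<le> j \<Longrightarrow> expectation (X j) = \<mu>"
    and "\<delta> > 0"
  shows "AE x in M. eventually (\<lambda>n. \<bar>(\<Sum>j\<in>{1..n}. X j x) / real n - \<mu>\<bar> < \<delta>) sequentially"
proof -
  have [measurable]: "X j \<in> borel_measurable M" if "1 \<le> j" for j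
    using indep that unfolding indep_vars_def by auto
  define A where "A n = {x\<in>space M. real n * \<delta> \<le> \<bar>(\<Sum>j\<in>{1..n}. X j x) - real n * \<mu>\<bar>}" for n
  define q where "q = exp (- 2 * \<delta>\<^sup>2 / (b - a)\<^sup>2)"
  have "q < 1" using \<open>\<delta> > 0\<close> \<open>a < b\<close> by (simp add: q_def)
  have [measurable]: "A n \<in> sets M" for n
    unfolding A_def by measurable
  have tail: "measure M (A n) \<le> 2 * q ^ n" for n
  proof (cases "n = 0")
    case True
    then show ?thesis by (simp add: order.trans[OF prob_le_1])
  next
    case False
    have Hoeffding: "Hoeffding_ineq M {1..n} X (\<lambda>_. a) (\<lambda>_. b)"
      unfolding Hoeffding_ineq_def
    proof unfold_locales
      show "indep_vars (\<lambda>_. borel) X {1..n}"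
        by (rule indep_vars_subset[OF indep]) auto
      show "AE x in M. X j x \<in> {a..b}" if "j \<in> {1..n}" for j
        using that bounded by simp
    qed simp
    have "(\<Sum>j\<in>{1..n}. expectation (X j)) = real n * \<mu>"
      by (simp add: expectation)
    then have "measure M (A n) \<le> 2 * exp (- 2 * (real n * \<delta>)\<^sup>2 / (\<Sum>j\<in>{1..n}. (b - a)\<^sup>2))"
      using Hoeffding_ineq.Hoeffding_ineq_abs_ge[OF Hoeffding, of "real n * \<delta>"] \<open>\<delta> > 0\<close> \<open>a < b\<close> False
      unfolding A_def by simp
    also have "- 2 * (real n * \<delta>)\<^sup>2 / (\<Sum>j\<in>{1..n}. (b - a)\<^sup>2) = real n * (- 2 * \<delta>\<^sup>2 / (b - a)\<^sup>2)"
      using False by (simp add: power2_eq_square)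
    finally show ?thesis
      by (simp only: q_def exp_of_nat_mult)
  qed
  have "summable (\<lambda>n. measure M (A n))"
    by (rule summable_comparison_test'[where N=0, OF summable_mult[OF summable_geometric]])
       (use tail \<open>q < 1\<close> in \<open>auto simp: q_def\<close>)
  then have "AE x in M. eventually (\<lambda>n. x \<in> space M - A n) sequentially"
    by (intro borel_cantelli_AE1) (simp_all add: emeasure_eq_measure)
  then show ?thesis
  proof (rule eventually_mono)
    fix x assume "eventually (\<lambda>n. x \<in> space M - A n) sequentially"
    then show "eventually (\<lambda>n. \<bar>(\<Sum>j\<in>{1..n}. X j x) / real n - \<mu>\<bar> < \<delta>) sequentially"
      using eventually_ge_at_top[of "1::nat"]
    proof eventually_elim
      case (elim n)
      then have "\<bar>(\<Sum>j\<in>{1..n}. X j x) - real n * \<mu>\<bar> < \<delta> * real n"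
        by (auto simp: A_def mult.commute)
      moreover have "(\<Sum>j\<in>{1..n}. X j x) / real n - \<mu> = ((\<Sum>j\<in>{1..n}. X j x) - real n * \<mu>) / real n"
        using elim by (simp add: diff_divide_distrib)
      ultimately show ?case
        using elim by (simp only: abs_divide pos_divide_less_eq)
    qed
  qed
qed

lemma (in prob_space) strong_law_bounded_indep:
  fixes X :: "nat \<Rightarrow> 'a \<Rightarrow> real"
  assumes "indep_vars (\<lambda>_. borel) X {1..}"
    and "\<And>j. 1 \<le> j \<Longrightarrow> AE x in M. X j x \<in> {a..b}" and "a < b"
    and "\<And>j. 1 \<le> j \<Longrightarrow> expectation (X j) = \<mu>"
  shows "AE x in M. (\<lambda>n. (\<Sum>j\<in>{1..n}. X j x) / real n) \<longlonglongrightarrow> \<mu>"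
proof -
  have "AE x in M. \<forall>k. eventually (\<lambda>n. \<bar>(\<Sum>j\<in>{1..n}. X j x) / real n - \<mu>\<bar> < 1 / Suc k) sequentially"
    unfolding AE_all_countable by (intro allI AE_eventually_mean_close[OF assms]) auto
  then show ?thesis
  proof (rule eventually_mono)
    fix x assume close: "\<forall>k. eventually (\<lambda>n. \<bar>(\<Sum>j\<in>{1..n}. X j x) / real n - \<mu>\<bar> < 1 / Suc k) sequentially"
    show "(\<lambda>n. (\<Sum>j\<in>{1..n}. X j x) / real n) \<longlonglongrightarrow> \<mu>"
    proof (rule tendstoI)
      fix e :: real assume "e > 0"
      then obtain k where "1 / real (Suc k) < e"
        using nat_approx_posE by blast
      with close[rule_format, of k]
      show "eventually (\<lambda>n. dist ((\<Sum>j\<in>{1..n}. X j x) / real n) \<mu> < e) sequentially"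
        by (auto simp: dist_real_def elim: eventually_mono)
    qed
  qed
qed

lemma (in prob_space) indep_vars_compose_pairs:
  assumes "indep_vars (\<lambda>_. N) (\<lambda>k. case k of Inl j \<Rightarrow> U j | Inr j \<Rightarrow> U' j) (I <+> I)"
    and g: "g \<in> measurable (N \<Otimes>\<^sub>M N) L"
  shows "indep_vars (\<lambda>_. L) (\<lambda>j \<omega>. g (U j \<omega>, U' j \<omega>)) I"
proof -
  define Z where "Z = (\<lambda>k. case k of Inl j \<Rightarrow> U j | Inr j \<Rightarrow> U' j)"
  have "indep_vars (\<lambda>j. PiM {Inl j, Inr j} (\<lambda>_. N)) (\<lambda>j \<omega>. restrict (\<lambda>k. Z k \<omega>) {Inl j, Inr j}) I"
    using assms(1) unfolding Z_def
    by (rule indep_vars_restrict) (auto simp: disjoint_family_on_def)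
  moreover have "(\<lambda>f. g (f (Inl j), f (Inr j))) \<in> measurable (PiM {Inl j, Inr j} (\<lambda>_. N)) L" for j
  proof -
    have "(\<lambda>f. (f (Inl j), f (Inr j))) \<in> measurable (PiM {Inl j, Inr j} (\<lambda>_. N)) (N \<Otimes>\<^sub>M N)"
      by (intro measurable_Pair measurable_component_singleton) auto
    then show ?thesis
      using g by (rule measurable_compose)
  qed
  ultimately have "indep_vars (\<lambda>_. L) (\<lambda>j \<omega>. (\<lambda>f. g (f (Inl j), f (Inr j))) (restrict (\<lambda>k. Z k \<omega>) {Inl j, Inr j})) I"
    by (rule indep_vars_compose2)
  then show ?thesis
    by (simp add: Z_def)
qed

lemma (in prob_space) indep_var_pair_components:
  assumes "indep_vars (\<lambda>_. N) (\<lambda>k. case k of Inl j \<Rightarrow> U j | Inr j \<Rightarrow> U' j) (I <+> I)" and "j \<in> I"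
  shows "indep_var N (U j) N (U' j)"
proof -
  define Z where "Z = (\<lambda>k. case k of Inl j \<Rightarrow> U j | Inr j \<Rightarrow> U' j)"
  have "indep_var (PiM {Inl j} (\<lambda>_. N)) (\<lambda>\<omega>. restrict (\<lambda>k. Z k \<omega>) {Inl j})
                  (PiM {Inr j} (\<lambda>_. N)) (\<lambda>\<omega>. restrict (\<lambda>k. Z k \<omega>) {Inr j})"
    using assms unfolding Z_def by (intro indep_var_restrict) auto
  then have "indep_var N ((\<lambda>f. f (Inl j)) \<circ> (\<lambda>\<omega>. restrict (\<lambda>k. Z k \<omega>) {Inl j}))
                       N ((\<lambda>f. f (Inr j)) \<circ> (\<lambda>\<omega>. restrict (\<lambda>k. Z k \<omega>) {Inr j}))"
    by (rule indep_var_compose) (auto intro: measurable_component_singleton)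
  then show ?thesis
    by (simp add: Z_def comp_def)
qed

lemma (in prob_space) AE_in_if_distr_uniform:
  assumes "V \<in> borel_measurable M" "distr M borel V = uniform_measure lborel S" "S \<in> sets borel"
  shows "AE \<omega> in M. V \<omega> \<in> S"
proof -
  have "AE x in distr M borel V. x \<in> S"
    unfolding assms(2) by (rule AE_uniform_measureI) (use assms(3) in auto)
  then show ?thesis
    by (subst (asm) AE_distr_iff) (use assms in auto)
qed

section \<open>Uniform convergence over the network class\<close>

lemma Hpot_regular:
  fixes \<phi> :: "real^'d::finite \<Rightarrow> real"
  assumes "\<phi> \<in> Hpot A H"
  shows "continuous_on ucube \<phi>"
    and "\<And>x. x \<in> ucube \<Longrightarrow> \<bar>\<phi> x\<bar> \<le> H"
    and "(real CARD('d) * H)-lipschitz_on ucube \<phi>"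
proof -
  have norm_le: "holder_norm 2 1 \<phi> \<le> ereal H"
    using assms by (simp add: Hpot_def)
  show "continuous_on ucube \<phi>" "\<And>x. x \<in> ucube \<Longrightarrow> \<bar>\<phi> x\<bar> \<le> H"
    using holder_norm_leD[OF norm_le] by simp_all
  show "(real CARD('d) * H)-lipschitz_on ucube \<phi>"
    using lipschitz_on_closure_if_partials_bounded[OF convex_box(2) ucube_int_nonempty, of \<phi> H]
      holder_norm_leD[OF norm_le] closure_ucube_int by simp
qed

lemma Hpot_finite_nets:
  fixes A :: "nat list" and H :: real
  obtains N :: "nat \<Rightarrow> (real^'d::finite \<Rightarrow> real) set"
  where "\<And>k. finite (N k)" "\<And>k. N k \<subseteq> Hpot A H"
    "\<And>k \<phi>. \<phi> \<in> Hpot A H \<Longrightarrow> \<exists>\<psi>\<in>N k. \<forall>x\<in>ucube. \<bar>\<phi> x - \<psi> x\<bar> \<le> 1 / Suc k"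
proof -
  define net where "net k N \<longleftrightarrow> finite N \<and> N \<subseteq> Hpot A H \<and>
          (\<forall>\<phi>\<in>Hpot A H. \<exists>\<psi>\<in>N. \<forall>x\<in>ucube. \<bar>\<phi> x - \<psi> x\<bar> \<le> 1 / Suc k)"
    for k and N :: "(real^'d \<Rightarrow> real) set"
  have "\<exists>N. net k N" for k
    unfolding net_def
    by (rule finite_uniform_net_if_bounded_lipschitz[where S=ucube and K="Hpot A H" and H=H
          and L="real CARD('d) * H"]) (simp_all add: Hpot_regular(2,3))
  then have N: "net k (SOME N. net k N)" for k
    by (rule someI_ex)
  show ?thesis
  proof (rule that)
    show "finite (SOME N. net k N)" "(SOME N. net k N) \<subseteq> Hpot A H" for k
      using N[of k] by (simp_all add: net_def)
    show "\<exists>\<psi>\<in>(SOME N. net k N). \<forall>x\<in>ucube. \<bar>\<phi> x - \<psi> x\<bar> \<le> 1 / Suc k"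
      if "\<phi> \<in> Hpot A H" for k \<phi>
      using N[of k] that unfolding net_def by (elim conjE bspec)
  qed
qed

lemma Hpot_penalties_close:
  fixes \<phi> \<psi> :: "real^'d::finite \<Rightarrow> real"
  assumes "\<phi> \<in> Hpot A H" "\<psi> \<in> Hpot A H" "\<And>x. x \<in> ucube \<Longrightarrow> \<bar>\<phi> x - \<psi> x\<bar> \<le> \<delta>" "0 \<le> \<delta>"
    and samples: "\<forall>j\<ge>1. U j \<omega> \<in> ucube \<and> U' j \<omega> \<in> ucube"
  shows "\<bar>emp_penalty \<kappa> m U U' n \<omega> \<phi> - emp_penalty \<kappa> m U U' n \<omega> \<psi>\<bar> \<le> 2 * \<delta>"
    and "\<bar>penalty \<kappa> \<phi> - penalty \<kappa> \<psi>\<bar> \<le> 2 * \<delta>"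
proof -
  show "\<bar>emp_penalty \<kappa> m U U' n \<omega> \<phi> - emp_penalty \<kappa> m U U' n \<omega> \<psi>\<bar> \<le> 2 * \<delta>"
    by (rule emp_penalty_diff_le[OF _ assms(3,4)]) (simp add: samples)
  show "\<bar>penalty \<kappa> \<phi> - penalty \<kappa> \<psi>\<bar> \<le> 2 * \<delta>"
    by (rule penalty_diff_le[OF Hpot_regular(1)[OF assms(1)] Hpot_regular(1)[OF assms(2)]
          Hpot_regular(2)[OF assms(1)] Hpot_regular(2)[OF assms(2)] assms(3)])
qed

lemma SUP_abs_diff_tendsto_0_if_finite_approx:
  fixes F :: "nat \<Rightarrow> 'a \<Rightarrow> real" and P :: "'a \<Rightarrow> real"
  assumes "K \<noteq> {}"
    and approx: "\<And>e. e > 0 \<Longrightarrow> \<exists>N. finite N \<and> (\<forall>\<psi>\<in>N. (\<lambda>n. F n \<psi>) \<longlonglongrightarrow> P \<psi>) \<and>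
                     (\<forall>\<phi>\<in>K. \<exists>\<psi>\<in>N. (\<forall>n. \<bar>F n \<phi> - F n \<psi>\<bar> \<le> e) \<and> \<bar>P \<phi> - P \<psi>\<bar> \<le> e)"
  shows "(\<lambda>n. SUP \<phi>\<in>K. ereal \<bar>F n \<phi> - P \<phi>\<bar>) \<longlonglongrightarrow> 0"
proof (rule order_tendstoI)
  fix a :: ereal assume "a < 0"
  obtain \<phi>0 where "\<phi>0 \<in> K" using \<open>K \<noteq> {}\<close> by blast
  have "a < ereal \<bar>F n \<phi>0 - P \<phi>0\<bar>" for n
    using \<open>a < 0\<close> by (rule less_le_trans) simp
  then have "a < (SUP \<phi>\<in>K. ereal \<bar>F n \<phi> - P \<phi>\<bar>)" for n
    using SUP_upper[OF \<open>\<phi>0 \<in> K\<close>, of "\<lambda>\<phi>. ereal \<bar>F n \<phi> - P \<phi>\<bar>"] by (rule less_le_trans)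
  then show "eventually (\<lambda>n. a < (SUP \<phi>\<in>K. ereal \<bar>F n \<phi> - P \<phi>\<bar>)) sequentially"
    by (rule always_eventually[OF allI])
next
  fix a :: ereal assume "0 < a"
  then obtain z where "0 < ereal z" "ereal z < a"
    using ereal_dense2 by blast
  then have "0 < z / 3" by simp
  then obtain N where "finite N" and conv: "\<forall>\<psi>\<in>N. (\<lambda>n. F n \<psi>) \<longlonglongrightarrow> P \<psi>"
    and near: "\<forall>\<phi>\<in>K. \<exists>\<psi>\<in>N. (\<forall>n. \<bar>F n \<phi> - F n \<psi>\<bar> \<le> z / 3) \<and> \<bar>P \<phi> - P \<psi>\<bar> \<le> z / 3"
    using approx[OF \<open>0 < z / 3\<close>] by blast
  have "\<forall>\<psi>\<in>N. eventually (\<lambda>n. \<bar>F n \<psi> - P \<psi>\<bar> < z / 3) sequentially"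
  proof
    fix \<psi> assume "\<psi> \<in> N"
    with conv have "(\<lambda>n. F n \<psi>) \<longlonglongrightarrow> P \<psi>" by blast
    from tendstoD[OF this \<open>0 < z / 3\<close>]
    show "eventually (\<lambda>n. \<bar>F n \<psi> - P \<psi>\<bar> < z / 3) sequentially"
      by (simp add: dist_real_def)
  qed
  with \<open>finite N\<close> have "eventually (\<lambda>n. \<forall>\<psi>\<in>N. \<bar>F n \<psi> - P \<psi>\<bar> < z / 3) sequentially"
    by (rule eventually_ball_finite)
  then show "eventually (\<lambda>n. (SUP \<phi>\<in>K. ereal \<bar>F n \<phi> - P \<phi>\<bar>) < a) sequentially"
  proof eventually_elim
    case (elim n)
    have "\<bar>F n \<phi> - P \<phi>\<bar> \<le> z" if "\<phi> \<in> K" for \<phi>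
    proof -
      from bspec[OF near that] obtain \<psi> where "\<psi> \<in> N"
        and "(\<forall>n. \<bar>F n \<phi> - F n \<psi>\<bar> \<le> z / 3) \<and> \<bar>P \<phi> - P \<psi>\<bar> \<le> z / 3" ..
      moreover from elim \<open>\<psi> \<in> N\<close> have "\<bar>F n \<psi> - P \<psi>\<bar> < z / 3" ..
      ultimately have "\<bar>F n \<phi> - F n \<psi>\<bar> \<le> z / 3" "\<bar>P \<phi> - P \<psi>\<bar> \<le> z / 3" "\<bar>F n \<psi> - P \<psi>\<bar> < z / 3"
        by simp_all
      then show ?thesis
        by linarith
    qed
    then have "(SUP \<phi>\<in>K. ereal \<bar>F n \<phi> - P \<phi>\<bar>) \<le> ereal z"
      by (intro SUP_least) simp
    then show ?case
      using \<open>ereal z < a\<close> by (rule le_less_trans)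
  qed
qed

lemma (in prob_space) empirical_mean_tendsto_penalty:
  fixes \<phi> :: "real^'d::finite \<Rightarrow> real" and U U' :: "nat \<Rightarrow> 'a \<Rightarrow> real^'d"
  assumes indep: "indep_vars (\<lambda>_. borel) (\<lambda>k. case k of Inl j \<Rightarrow> U j | Inr j \<Rightarrow> U' j) ({1..} <+> {1..})"
    and uniform: "\<forall>j\<ge>1. distr M borel (U j) = uniform_measure lborel ucube"
    and uniform': "\<forall>j\<ge>1. distr M borel (U' j) = uniform_measure lborel ucube"
    and continuous: "continuous_on ucube \<phi>" and bounded: "\<And>x. x \<in> ucube \<Longrightarrow> \<bar>\<phi> x\<bar> \<le> H"
  shows "AE \<omega> in M. (\<lambda>n. (\<Sum>j\<in>{1..n}. clamped_penalty_integrand \<kappa> \<phi> (U j \<omega>, U' j \<omega>)) / real n)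
                       \<longlonglongrightarrow> penalty \<kappa> \<phi>"
proof -
  let ?g = "clamped_penalty_integrand \<kappa> \<phi>"
  let ?B = "2 * H + \<bar>\<kappa>\<bar> * real CARD('d)^2"
  have g: "?g \<in> borel_measurable (borel \<Otimes>\<^sub>M borel)"
    using borel_measurable_clamped_penalty_integrand[OF continuous] by (simp add: borel_prod)
  have g_bounds: "0 \<le> ?g p" "?g p \<le> ?B" for p
    using clamped_penalty_integrand_bounds[where \<phi>=\<phi> and \<kappa>=\<kappa>, OF bounded] by simp_all
  show ?thesis
  proof (rule strong_law_bounded_indep[where X="\<lambda>j \<omega>. ?g (U j \<omega>, U' j \<omega>)" and a=0 and b="?B + 1"])
    show "indep_vars (\<lambda>_. borel) (\<lambda>j \<omega>. ?g (U j \<omega>, U' j \<omega>)) {1..}"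
      by (rule indep_vars_compose_pairs[OF indep g])
    show "AE \<omega> in M. ?g (U j \<omega>, U' j \<omega>) \<in> {0 .. ?B + 1}" for j
      by (intro AE_I2) (simp add: g_bounds(1) order_trans[OF g_bounds(2)])
    show "0 < ?B + 1"
      using g_bounds[of undefined] by linarith
    show "expectation (\<lambda>\<omega>. ?g (U j \<omega>, U' j \<omega>)) = penalty \<kappa> \<phi>" if "1 \<le> j" for j
    proof -
      have "indep_var borel (U j) borel (U' j)"
        using indep_var_pair_components[OF indep] that by simp
      note pair = this[unfolded indep_var_distribution_eq]
      have rv: "(\<lambda>\<omega>. (U j \<omega>, U' j \<omega>)) \<in> measurable M (borel \<Otimes>\<^sub>M borel)"
        using pair by (intro measurable_Pair) simp_all
      have "distr M (borel \<Otimes>\<^sub>M borel) (\<lambda>\<omega>. (U j \<omega>, U' j \<omega>))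
          = uniform_measure lborel ucube \<Otimes>\<^sub>M uniform_measure lborel ucube"
        using pair uniform uniform' that by simp
      then have "expectation (\<lambda>\<omega>. ?g (U j \<omega>, U' j \<omega>))
          = integral\<^sup>L (uniform_measure lborel ucube \<Otimes>\<^sub>M uniform_measure lborel ucube) ?g"
        using integral_distr[OF rv g] by simp
      also have "\<dots> = penalty \<kappa> \<phi>"
        by (rule penalty_eq_integral_uniform[symmetric, OF continuous])
      finally show ?thesis .
    qed
  qed
qed

lemma (in prob_space) AE_samples_in_ucube:
  fixes U U' :: "nat \<Rightarrow> 'a \<Rightarrow> real^'d::finite"
  assumes indep: "indep_vars (\<lambda>_. borel) (\<lambda>k. case k of Inl j \<Rightarrow> U j | Inr j \<Rightarrow> U' j) ({1..} <+> {1..})"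
    and uniform: "\<forall>j\<ge>1. distr M borel (U j) = uniform_measure lborel ucube"
    and uniform': "\<forall>j\<ge>1. distr M borel (U' j) = uniform_measure lborel ucube"
  shows "AE \<omega> in M. \<forall>j\<ge>1. U j \<omega> \<in> ucube \<and> U' j \<omega> \<in> ucube"
  unfolding AE_all_countable
proof (intro allI AE_impI)
  fix j :: nat assume "1 \<le> j"
  then have "indep_var borel (U j) borel (U' j)"
    using indep_var_pair_components[OF indep] by simp
  then have "AE \<omega> in M. U j \<omega> \<in> ucube" "AE \<omega> in M. U' j \<omega> \<in> ucube"
    using uniform uniform' \<open>1 \<le> j\<close>
    by (auto intro!: AE_in_if_distr_uniform dest: indep_var_rv1 indep_var_rv2)
  then show "AE \<omega> in M. U j \<omega> \<in> ucube \<and> U' j \<omega> \<in> ucube"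
    by (rule AE_conjI)
qed

lemma (in prob_space) emp_penalty_tendsto_penalty:
  fixes \<phi> :: "real^'d::finite \<Rightarrow> real" and U U' :: "nat \<Rightarrow> 'a \<Rightarrow> real^'d"
  assumes indep: "indep_vars (\<lambda>_. borel) (\<lambda>k. case k of Inl j \<Rightarrow> U j | Inr j \<Rightarrow> U' j) ({1..} <+> {1..})"
    and uniform: "\<forall>j\<ge>1. distr M borel (U j) = uniform_measure lborel ucube"
    and uniform': "\<forall>j\<ge>1. distr M borel (U' j) = uniform_measure lborel ucube"
    and m: "filterlim m at_top sequentially" and \<phi>: "\<phi> \<in> Hpot A H"
  shows "AE \<omega> in M. (\<lambda>n. emp_penalty \<kappa> m U U' n \<omega> \<phi>) \<longlonglongrightarrow> penalty \<kappa> \<phi>"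
proof -
  have "AE \<omega> in M. (\<lambda>n. (\<Sum>j\<in>{1..n}. clamped_penalty_integrand \<kappa> \<phi> (U j \<omega>, U' j \<omega>)) / real n)
                       \<longlonglongrightarrow> penalty \<kappa> \<phi>"
    by (rule empirical_mean_tendsto_penalty[OF indep uniform uniform' Hpot_regular(1)[OF \<phi>]])
       (rule Hpot_regular(2)[OF \<phi>])
  with AE_samples_in_ucube[OF indep uniform uniform'] show ?thesis
  proof eventually_elim
    case (elim \<omega>)
    have "(\<Sum>j\<in>{1..N}. clamped_penalty_integrand \<kappa> \<phi> (U j \<omega>, U' j \<omega>))
        = (\<Sum>j\<in>{1..N}. penalty_integrand \<kappa> \<phi> (U j \<omega>) (U' j \<omega>))" for N
      using elim(1) by (intro sum.cong) (simp_all add: clamped_penalty_integrand_eq)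
    then have "emp_penalty \<kappa> m U U' n \<omega> \<phi>
        = (\<Sum>j\<in>{1..m n}. clamped_penalty_integrand \<kappa> \<phi> (U j \<omega>, U' j \<omega>)) / real (m n)" for n
      by (simp add: emp_penalty_def)
    then show ?case
      using filterlim_compose[OF elim(2) m] by (simp add: comp_def)
  qed
qed

lemma SUP_emp_penalty_tendsto_0_if_nets:
  fixes N :: "nat \<Rightarrow> (real^'d::finite \<Rightarrow> real) set"
  assumes nonempty: "Hpot A H \<noteq> ({} :: (real^'d \<Rightarrow> real) set)"
    and nets: "\<And>k. finite (N k)" "\<And>k. N k \<subseteq> Hpot A H"
      "\<And>k \<phi>. \<phi> \<in> Hpot A H \<Longrightarrow> \<exists>\<psi>\<in>N k. \<forall>x\<in>ucube. \<bar>\<phi> x - \<psi> x\<bar> \<le> 1 / Suc k"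
    and conv: "\<forall>\<psi>\<in>(\<Union>k. N k). (\<lambda>n. emp_penalty \<kappa> m U U' n \<omega> \<psi>) \<longlonglongrightarrow> penalty \<kappa> \<psi>"
    and samples: "\<forall>j\<ge>1. U j \<omega> \<in> ucube \<and> U' j \<omega> \<in> ucube"
  shows "(\<lambda>n. SUP \<phi>\<in>Hpot A H. ereal \<bar>emp_penalty \<kappa> m U U' n \<omega> \<phi> - penalty \<kappa> \<phi>\<bar>) \<longlonglongrightarrow> 0"
proof (rule SUP_abs_diff_tendsto_0_if_finite_approx[OF nonempty])
  fix e :: real assume "e > 0"
  then obtain k where k: "1 / real (Suc k) < e / 2"
    using nat_approx_posE[of "e / 2"] by auto
  show "\<exists>N'. finite N' \<and> (\<forall>\<psi>\<in>N'. (\<lambda>n. emp_penalty \<kappa> m U U' n \<omega> \<psi>) \<longlonglongrightarrow> penalty \<kappa> \<psi>) \<and>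
          (\<forall>\<phi>\<in>Hpot A H. \<exists>\<psi>\<in>N'. (\<forall>n. \<bar>emp_penalty \<kappa> m U U' n \<omega> \<phi> - emp_penalty \<kappa> m U U' n \<omega> \<psi>\<bar> \<le> e)
                                 \<and> \<bar>penalty \<kappa> \<phi> - penalty \<kappa> \<psi>\<bar> \<le> e)"
  proof (intro exI[of _ "N k"] conjI ballI)
    show "finite (N k)" by (rule nets(1))
    show "(\<lambda>n. emp_penalty \<kappa> m U U' n \<omega> \<psi>) \<longlonglongrightarrow> penalty \<kappa> \<psi>" if "\<psi> \<in> N k" for \<psi>
      using conv that by (simp add: UN_iff)
  next
    fix \<phi> :: "real^'d \<Rightarrow> real" assume "\<phi> \<in> Hpot A H"
    from nets(3)[OF this, of k] obtain \<psi> where "\<psi> \<in> N k" and close: "\<forall>x\<in>ucube. \<bar>\<phi> x - \<psi> x\<bar> \<le> 1 / Suc k" ..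
    have "\<psi> \<in> Hpot A H" using nets(2) \<open>\<psi> \<in> N k\<close> by (rule subsetD)
    note penalties_close = Hpot_penalties_close[OF \<open>\<phi> \<in> Hpot A H\<close> \<open>\<psi> \<in> Hpot A H\<close>, of "1 / Suc k"]
    show "\<exists>\<psi>\<in>N k. (\<forall>n. \<bar>emp_penalty \<kappa> m U U' n \<omega> \<phi> - emp_penalty \<kappa> m U U' n \<omega> \<psi>\<bar> \<le> e)
                   \<and> \<bar>penalty \<kappa> \<phi> - penalty \<kappa> \<psi>\<bar> \<le> e"
    proof (intro bexI[OF _ \<open>\<psi> \<in> N k\<close>] conjI allI)
      show "\<bar>emp_penalty \<kappa> m U U' n \<omega> \<phi> - emp_penalty \<kappa> m U U' n \<omega> \<psi>\<bar> \<le> e" for n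
        using penalties_close(1)[of U \<omega> U' \<kappa> m n] close samples k by simp
      show "\<bar>penalty \<kappa> \<phi> - penalty \<kappa> \<psi>\<bar> \<le> e"
        using penalties_close(2)[of U \<omega> U' \<kappa>] close samples k by simp
    qed
  qed
qed

theorem proposition7:
  fixes p_star :: "real^'d::finite \<Rightarrow> real"
    and phi_star :: "real^'d \<Rightarrow> real"
    and M :: real and \<alpha> :: real
    and phi_eps :: "real \<Rightarrow> (real^'d \<Rightarrow> real)"
    and arch :: "real \<Rightarrow> nat list"
    and Htilde :: "real \<Rightarrow> real"
    and m :: "nat \<Rightarrow> nat"
    and Pr :: "'w measure"
    and U U' :: "nat \<Rightarrow> 'w \<Rightarrow> real^'d"
    and \<epsilon> :: real
  defines "\<beta> \<equiv> 1 / M"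
  defines "mu_star \<equiv> density lborel (\<lambda>x. ennreal (p_star x))"
  assumes alpha: "0 < \<alpha>" "\<alpha> < 1"
    and p_holder: "p_star \<in> holder_space 1 \<alpha>"
    and p_pos: "\<forall>x\<in>ucube. p_star x > 0"
    and p_zero: "\<forall>x. x \<notin> ucube \<longrightarrow> p_star x = 0"
    and mu_prob: "prob_space mu_star"
    and phi_holder: "phi_star \<in> holder_space 3 \<alpha>"
    and brenier_convex: "convex_on ucube phi_star"
    and brenier_push: "mu_star = pushfwd (grad phi_star)"
    and M_gt: "1 < M"
    and hess_star: "hess_between (1 / M) M phi_star"
    and net: "\<forall>e>0. is_recu_net (arch e) (phi_eps e)"
    and net_hess: "\<forall>e>0. hess_between (1 / (2 * M)) (2 * M) (phi_eps e)"
    and net_js: "\<forall>e>0. JS_div mu_star (pushfwd (grad (phi_eps e))) \<le> e"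
    and Htilde: "\<forall>e>0. holder_norm 2 1 (phi_eps e) \<le> ereal (Htilde e)"
    and m_mono: "mono m"
    and m_lim: "filterlim m at_top sequentially"
    and Pr: "prob_space Pr"
    and indep: "prob_space.indep_vars Pr (\<lambda>_. borel)
                  (\<lambda>k. case k of Inl j \<Rightarrow> U j | Inr j \<Rightarrow> U' j) ({1..} <+> {1..})"
    and unifU: "\<forall>j\<ge>1. distr Pr borel (U j) = uniform_measure lborel ucube"
    and unifU': "\<forall>j\<ge>1. distr Pr borel (U' j) = uniform_measure lborel ucube"
    and eps: "0 < \<epsilon>"
  shows "AE \<omega> in Pr.
           (\<lambda>n. SUP \<phi>\<in>Hpot (arch \<epsilon>) (Htilde \<epsilon>).
                   ereal \<bar>emp_penalty \<beta> m U U' n \<omega> \<phi> - penalty \<beta> \<phi>\<bar>) \<longlonglongrightarrow> 0"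
proof -
  interpret prob_space Pr by (rule Pr)
  obtain N :: "nat \<Rightarrow> (real^'d \<Rightarrow> real) set"
    where nets: "\<And>k. finite (N k)" "\<And>k. N k \<subseteq> Hpot (arch \<epsilon>) (Htilde \<epsilon>)"
      "\<And>k \<phi>. \<phi> \<in> Hpot (arch \<epsilon>) (Htilde \<epsilon>) \<Longrightarrow> \<exists>\<psi>\<in>N k. \<forall>x\<in>ucube. \<bar>\<phi> x - \<psi> x\<bar> \<le> 1 / Suc k"
    using Hpot_finite_nets[of "arch \<epsilon>" "Htilde \<epsilon>"] by metis
  have "phi_eps \<epsilon> \<in> Hpot (arch \<epsilon>) (Htilde \<epsilon>)"
    using net Htilde eps by (simp add: Hpot_def)
  then have nonempty: "Hpot (arch \<epsilon>) (Htilde \<epsilon>) \<noteq> ({} :: (real^'d \<Rightarrow> real) set)"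
    by blast
  have "countable (\<Union>k. N k)"
    using nets(1) by (simp add: countable_finite)
  then have "AE \<omega> in Pr. \<forall>\<psi>\<in>(\<Union>k. N k). (\<lambda>n. emp_penalty \<beta> m U U' n \<omega> \<psi>) \<longlonglongrightarrow> penalty \<beta> \<psi>"
    using nets(2) by (intro AE_ball_countable' emp_penalty_tendsto_penalty[OF indep unifU unifU' m_lim]) auto
  with AE_samples_in_ucube[OF indep unifU unifU'] show ?thesis
    by eventually_elim (rule SUP_emp_penalty_tendsto_0_if_nets[OF nonempty nets])
qed

end
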